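(* For every unitary $U$ on $\mathbb C^2\otimes\mathbb C^2$ and every unit vector $|\beta\rangle\in\mathbb C^2$, there exists a unit vector $|\alpha\rangle\in\mathbb C^2$ and density operators $\alpha',\beta'$ on $\mathbb C^2$ such that $U(|\alpha\rangle\langle\alpha|\otimes|\beta\rangle\langle\beta|)U^\dagger=\alpha'\otimes\beta'$. *)

theory Defs
  imports "HOL-Analysis.Analysis" "HOL-Library.Complex_Order"
begin

text \<open>Vectors in C^2 are \<open>complex^2\<close>; operators on C^2 are \<open>complex^2^2\<close>;
  operators on C^2 (x) C^2 are matrices indexed by the product type \<open>2 \<times> 2\<close>.\<close>

definition adjointM :: "complex^'n^'m \<Rightarrow> complex^'m^'n" where
  "adjointM A = (\<chi> i j. cnj (A $ j $ i))"

definition unitaryM :: "complex^'n^'n \<Rightarrow> bool" where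
  "unitaryM U \<longleftrightarrow> U ** adjointM U = mat 1 \<and> adjointM U ** U = mat 1"

definition outer :: "complex^'n \<Rightarrow> complex^'n^'n" where
  "outer v = (\<chi> i j. v $ i * cnj (v $ j))"

definition kron :: "complex^'n^'n \<Rightarrow> complex^'m^'m \<Rightarrow> complex^('n \<times> 'm)^('n \<times> 'm)" where
  "kron A B = (\<chi> p q. A $ fst p $ fst q * B $ snd p $ snd q)"

text \<open>Density operator: Hermitian, positive semidefinite, trace one.
  (\<open>0 \<le> z\<close> on complex numbers means z is real and nonnegative.)\<close>
definition density_op :: "complex^'n^'n \<Rightarrow> bool" where
  "density_op A \<longleftrightarrow> adjointM A = A
     \<and> (\<forall>v. 0 \<le> (\<Sum>i\<in>UNIV. cnj (v $ i) * (A *v v) $ i))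
     \<and> trace A = 1"

end

theory Submission
  imports Defs
begin

text \<open>For fixed \<open>\<beta>\<close>, the vector \<open>U (\<alpha> \<otimes> \<beta>)\<close> depends linearly on \<open>\<alpha>\<close>. A vector \<open>v\<close> of
  \<open>\<complex>\<^sup>2 \<otimes> \<complex>\<^sup>2\<close> is a product vector as soon as its coefficient matrix \<open>(v\<^sub>i\<^sub>j)\<close> is
  singular, and the determinant of the coefficient matrix of \<open>U (\<alpha> \<otimes> \<beta>)\<close> is a binary
  quadratic form in the coordinates of \<open>\<alpha>\<close>, which has a nontrivial zero over \<open>\<complex>\<close>.
  For that \<open>\<alpha>\<close>, normalised, the state \<open>U (|\<alpha>\<rangle>\<langle>\<alpha>| \<otimes> |\<beta>\<rangle>\<langle>\<beta>|) U\<^sup>\<dagger>\<close> is the pure state of a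
  unit product vector \<open>a' \<otimes> b'\<close>, i.e. \<open>|a'\<rangle>\<langle>a'| \<otimes> |b'\<rangle>\<langle>b'|\<close>.\<close>

definition tensor :: "'a::times^'n \<Rightarrow> 'a^'m \<Rightarrow> 'a^('n \<times> 'm)" where
  "tensor a b = (\<chi> p. a $ fst p * b $ snd p)"

definition tensor_det :: "'a::comm_ring_1^(2 \<times> 2) \<Rightarrow> 'a" where
  "tensor_det v = v $ (1,1) * v $ (2,2) - v $ (1,2) * v $ (2,1)"

lemma tensor_scaleR:
  fixes a :: "'a::real_algebra^'n" and b :: "'a^'m"
  shows "tensor (r *\<^sub>R a) (s *\<^sub>R b) = (r * s) *\<^sub>R tensor a b"
  by (simp add: tensor_def vec_eq_iff)

lemma tensor_smult_left: "tensor (c *s a) b = c *s tensor a b"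
  for a :: "'a::comm_semiring^'n" and b :: "'a^'m"
  by (simp add: tensor_def vec_eq_iff mult.assoc)

lemma tensor_add_left: "tensor (a + a') b = tensor a b + tensor a' b"
  for a a' :: "'a::semiring^'n" and b :: "'a^'m"
  by (simp add: tensor_def vec_eq_iff distrib_right)

lemma tensor_det_smult: "tensor_det (c *s v) = c\<^sup>2 * tensor_det v"
  by (simp add: tensor_det_def algebra_simps power2_eq_square)

lemma vector_2_decompose: "a = a $ 1 *s axis 1 1 + a $ 2 *s axis 2 1"
  for a :: "'a::semiring_1^2"
  by (simp add: vec_eq_iff forall_2 axis_def)

lemma forall_2_times_2: "(\<forall>p::2 \<times> 2. P p) \<longleftrightarrow> P (1,1) \<and> P (1,2) \<and> P (2,1) \<and> P (2,2)"
  unfolding split_paired_All forall_2 by blast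

lemma tensor_det_eq_0_imp_tensor:
  fixes v :: "'a::field^(2 \<times> 2)"
  assumes "tensor_det v = 0"
  shows "\<exists>a b. v = tensor a b"
proof (cases "v $ (1,1) = 0")
  case False
  have "v = tensor (vector [v $ (1,1), v $ (2,1)]) (vector [1, v $ (1,2) / v $ (1,1)])"
    using False assms unfolding vec_eq_iff forall_2_times_2
    by (simp add: tensor_def tensor_det_def field_simps)
  then show ?thesis by blast
next
  case True
  then consider "v $ (1,2) = 0" | "v $ (2,1) = 0"
    using assms by (auto simp: tensor_det_def)
  then show ?thesis
  proof cases
    case 1
    then have "v = tensor (vector [0, 1]) (vector [v $ (2,1), v $ (2,2)])"
      using True unfolding vec_eq_iff forall_2_times_2 by (simp add: tensor_def)
    then show ?thesis by blast
  next
    case 2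
    then have "v = tensor (vector [v $ (1,2), v $ (2,2)]) (vector [0, 1])"
      using True unfolding vec_eq_iff forall_2_times_2 by (simp add: tensor_def)
    then show ?thesis by blast
  qed
qed

lemma binary_quadratic_form_nontrivial_zero:
  fixes c\<^sub>1 c\<^sub>2 c\<^sub>3 :: complex
  shows "\<exists>x y. (x, y) \<noteq> (0, 0) \<and> c\<^sub>1 * x\<^sup>2 + c\<^sub>2 * x * y + c\<^sub>3 * y\<^sup>2 = 0"
proof (cases "c\<^sub>1 = 0")
  case True
  then show ?thesis by (intro exI[of _ 1] exI[of _ 0]) simp
next
  case False
  define s where "s = csqrt (c\<^sub>2\<^sup>2 - 4 * c\<^sub>1 * c\<^sub>3)"
  define x where "x = (- c\<^sub>2 + s) / (2 * c\<^sub>1)"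
  have "2 * c\<^sub>1 * x + c\<^sub>2 = s"
    using False by (simp add: x_def field_simps)
  then have "4 * c\<^sub>1 * (c\<^sub>1 * x\<^sup>2 + c\<^sub>2 * x + c\<^sub>3) = s\<^sup>2 - (c\<^sub>2\<^sup>2 - 4 * c\<^sub>1 * c\<^sub>3)"
    by (auto simp: algebra_simps power2_eq_square)
  then have "4 * c\<^sub>1 * (c\<^sub>1 * x\<^sup>2 + c\<^sub>2 * x + c\<^sub>3) = 0"
    by (simp add: s_def)
  then have "c\<^sub>1 * x\<^sup>2 + c\<^sub>2 * x + c\<^sub>3 = 0"
    using False by simp
  then show ?thesis by (intro exI[of _ x] exI[of _ 1]) simp
qed

lemma pencil_has_singular_member:
  fixes P Q :: "complex^(2 \<times> 2)"
  shows "\<exists>x y. (x, y) \<noteq> (0, 0) \<and> tensor_det (x *s P + y *s Q) = 0"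
proof -
  define c\<^sub>2 where "c\<^sub>2 = P $ (1,1) * Q $ (2,2) + Q $ (1,1) * P $ (2,2)
    - P $ (1,2) * Q $ (2,1) - Q $ (1,2) * P $ (2,1)"
  have "tensor_det (x *s P + y *s Q)
      = tensor_det P * x\<^sup>2 + c\<^sub>2 * x * y + tensor_det Q * y\<^sup>2" for x y
    by (simp add: tensor_det_def c\<^sub>2_def algebra_simps power2_eq_square)
  then show ?thesis
    using binary_quadratic_form_nontrivial_zero[of "tensor_det P" c\<^sub>2 "tensor_det Q"] by metis
qed

lemma exists_unit_tensor_det_eq_0:
  fixes U :: "complex^(2 \<times> 2)^(2 \<times> 2)" and \<beta> :: "complex^2"
  shows "\<exists>\<alpha>. norm \<alpha> = 1 \<and> tensor_det (U *v tensor \<alpha> \<beta>) = 0"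
proof -
  have linear: "U *v tensor \<alpha> \<beta>
      = \<alpha> $ 1 *s (U *v tensor (axis 1 1) \<beta>) + \<alpha> $ 2 *s (U *v tensor (axis 2 1) \<beta>)" for \<alpha>
    by (subst vector_2_decompose)
      (simp add: tensor_add_left tensor_smult_left matrix_vector_right_distrib vector_scalar_commute)
  obtain x y where "(x, y) \<noteq> (0, 0)"
    and "tensor_det (x *s (U *v tensor (axis 1 1) \<beta>) + y *s (U *v tensor (axis 2 1) \<beta>)) = 0"
    using pencil_has_singular_member by blast
  moreover define \<alpha>\<^sub>0 :: "complex^2" where "\<alpha>\<^sub>0 = vector [x, y]"
  ultimately have "\<alpha>\<^sub>0 \<noteq> 0" and det0: "tensor_det (U *v tensor \<alpha>\<^sub>0 \<beta>) = 0"
    by (auto simp: vec_eq_iff forall_2 linear[of \<alpha>\<^sub>0])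
  define c where "c = complex_of_real (1 / norm \<alpha>\<^sub>0)"
  have "c *s \<alpha>\<^sub>0 = (1 / norm \<alpha>\<^sub>0) *\<^sub>R \<alpha>\<^sub>0"
    unfolding c_def vec_eq_iff vector_smult_component vector_scaleR_component
    by (simp add: scaleR_conv_of_real)
  then have "norm (c *s \<alpha>\<^sub>0) = 1"
    using \<open>\<alpha>\<^sub>0 \<noteq> 0\<close> by simp
  moreover have "tensor_det (U *v tensor (c *s \<alpha>\<^sub>0) \<beta>) = 0"
    using det0 by (simp add: tensor_smult_left vector_scalar_commute tensor_det_smult)
  ultimately show ?thesis by blast
qed

lemma kron_outer: "kron (outer a) (outer b) = outer (tensor a b)"
  by (simp add: vec_eq_iff kron_def outer_def tensor_def)

lemma outer_conj: "U ** outer w ** adjointM U = outer (U *v w)"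
proof -
  have "(U ** outer w ** adjointM U) $ i $ j
      = (\<Sum>l\<in>UNIV. (\<Sum>k\<in>UNIV. U $ i $ k * (w $ k * cnj (w $ l))) * cnj (U $ j $ l))" for i j
    by (simp add: matrix_matrix_mult_def outer_def adjointM_def)
  also have "\<dots> i j = (\<Sum>l\<in>UNIV. \<Sum>k\<in>UNIV. (U $ i $ k * w $ k) * cnj (U $ j $ l * w $ l))" for i j
    by (simp add: sum_distrib_left sum_distrib_right mult_ac)
  also have "\<dots> i j = (\<Sum>k\<in>UNIV. U $ i $ k * w $ k) * cnj (\<Sum>l\<in>UNIV. U $ j $ l * w $ l)" for i j
    unfolding cnj_sum sum_product by (rule sum.swap)
  finally show ?thesis
    by (simp add: vec_eq_iff outer_def matrix_vector_mult_def)
qed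

lemma trace_kron: "trace (kron A B) = trace A * trace B"
  unfolding trace_def kron_def
  by (simp add: sum_product sum.cartesian_product split_def)

lemma trace_unitary_conj:
  assumes "unitaryM U"
  shows "trace (U ** X ** adjointM U) = trace X"
proof -
  have "trace (U ** X ** adjointM U) = trace ((adjointM U ** U) ** X)"
    by (simp add: trace_mul_sym[of "U ** X"] matrix_mul_assoc)
  then show ?thesis
    using assms by (simp add: unitaryM_def)
qed

lemma trace_outer: "trace (outer a) = complex_of_real ((norm a)\<^sup>2)"
proof -
  have "trace (outer a) = (\<Sum>i\<in>UNIV. complex_of_real ((cmod (a $ i))\<^sup>2))"
    unfolding trace_def outer_def by (simp add: complex_norm_square[symmetric])
  also have "\<dots> = complex_of_real ((norm a)\<^sup>2)"
    by (simp add: norm_vec_def L2_set_def sum_nonneg)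
  finally show ?thesis .
qed

lemma norm_unitary_mult:
  assumes "unitaryM U"
  shows "norm (U *v w) = norm w"
proof -
  have "trace (outer (U *v w)) = trace (outer w)"
    using trace_unitary_conj[OF assms, of "outer w"] by (simp add: outer_conj)
  then show ?thesis
    unfolding trace_outer of_real_eq_iff by simp
qed

lemma norm_tensor: "norm (tensor a b) = norm a * norm b"
  for a :: "complex^'n" and b :: "complex^'m"
proof -
  have "trace (outer (tensor a b)) = trace (outer a) * trace (outer b)"
    by (metis kron_outer trace_kron)
  then show ?thesis
    unfolding trace_outer of_real_mult[symmetric] of_real_eq_iff power_mult_distrib[symmetric]
    by simp
qed

lemma unit_tensor_unit_factors:
  fixes a :: "complex^'n" and b :: "complex^'m"
  assumes "norm (tensor a b) = 1"
  shows "\<exists>a' b'. norm a' = 1 \<and> norm b' = 1 \<and> tensor a' b' = tensor a b"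
proof -
  have "norm a * norm b = 1"
    using assms by (simp add: norm_tensor)
  then have "norm a \<noteq> 0" by auto
  then show ?thesis
    using \<open>norm a * norm b = 1\<close>
    by (intro exI[of _ "(1 / norm a) *\<^sub>R a"] exI[of _ "norm a *\<^sub>R b"]) (simp add: tensor_scaleR)
qed

lemma density_op_outer:
  fixes a :: "complex^'n"
  assumes "norm a = 1"
  shows "density_op (outer a)"
proof -
  have "0 \<le> (\<Sum>i\<in>UNIV. cnj (v $ i) * (outer a *v v) $ i)" for v
  proof -
    define z where "z = (\<Sum>j\<in>UNIV. cnj (a $ j) * v $ j)"
    have "(\<Sum>i\<in>UNIV. cnj (v $ i) * (outer a *v v) $ i)
        = (\<Sum>i\<in>UNIV. \<Sum>j\<in>UNIV. cnj (v $ i) * a $ i * (cnj (a $ j) * v $ j))"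
      by (simp add: outer_def matrix_vector_mult_def sum_distrib_left mult_ac)
    also have "\<dots> = cnj z * z"
      unfolding z_def cnj_sum sum_product by (simp add: mult.commute)
    also have "\<dots> = complex_of_real ((cmod z)\<^sup>2)"
      by (metis complex_norm_square mult.commute)
    finally show ?thesis by (simp add: less_eq_complex_def del: of_real_power)
  qed
  moreover have "adjointM (outer a) = outer a"
    by (simp add: adjointM_def outer_def vec_eq_iff mult.commute)
  moreover have "trace (outer a) = 1"
    using assms by (simp add: trace_outer)
  ultimately show ?thesis
    unfolding density_op_def by blast
qed

theorem theorem6:
  fixes U :: "complex^(2 \<times> 2)^(2 \<times> 2)" and \<beta> :: "complex^2"
  assumes "unitaryM U" and "norm \<beta> = 1"
  shows "\<exists>(\<alpha>::complex^2) (\<alpha>'::complex^2^2) (\<beta>'::complex^2^2).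
           norm \<alpha> = 1 \<and> density_op \<alpha>' \<and> density_op \<beta>' \<and>
           U ** kron (outer \<alpha>) (outer \<beta>) ** adjointM U = kron \<alpha>' \<beta>'"
proof -
  obtain \<alpha> where "norm \<alpha> = 1" and "tensor_det (U *v tensor \<alpha> \<beta>) = 0"
    using exists_unit_tensor_det_eq_0 by blast
  then obtain a b where ab: "U *v tensor \<alpha> \<beta> = tensor a b"
    using tensor_det_eq_0_imp_tensor by blast
  have "norm (tensor a b) = 1"
    using \<open>norm \<alpha> = 1\<close> assms by (simp flip: ab add: norm_unitary_mult norm_tensor)
  then obtain a' b' where "norm a' = 1" "norm b' = 1" and a'b': "tensor a' b' = tensor a b"
    using unit_tensor_unit_factors by blast
  have "U ** kron (outer \<alpha>) (outer \<beta>) ** adjointM U = kron (outer a') (outer b')"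
    by (simp add: kron_outer outer_conj ab a'b')
  then show ?thesis
    using \<open>norm \<alpha> = 1\<close> \<open>norm a' = 1\<close> \<open>norm b' = 1\<close> density_op_outer by blast
qed

end
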